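(* Sufficiency and separation are not incrementally conservative fairness measures. Precisely: there exist binary random variables $Y, A$ and two binary predictors $R, R'$ of $Y$, defined on the same population (so that the joint distribution of $(Y,A)$ is the same in both cases), such that $R$ satisfies both sufficiency ($Y \perp A \mid R$) and separation ($R \perp A \mid Y$), $R'$ has strictly higher accuracy than $R$, i.e. $P(R'=Y) > P(R=Y)$, and yet $R'$ satisfies neither sufficiency ($Y \perp A \mid R'$ fails) nor separation ($R' \perp A \mid Y$ fails).
   Context: Setting: $Y$ is the true label, $R$ is a prediction of $Y$, and $A$ is a group-membership variable, all random variables on a common probability space. $X \perp Z$ denotes independence, $P(X,Z)=P(X)P(Z)$; $X \perp Z \mid W$ denotes conditional independence, $P(X \mid Z, W) = P(X \mid W)$. A predictor $R$ satisfies sufficiency if $Y \perp A \mid R$, and separation if $R \perp A \mid Y$. The accuracy of a predictor $R$ is the degree to which it agrees with $Y$, i.e. $P(R=Y)$. A fairness measure is called incrementally conservative if the degree to which the measure is satisfied does not decrease when the accuracy of the predictor is increased; in particular, failure of incremental conservativeness is witnessed by a predictor satisfying the measure exactly together with a more accurate predictor that no longer satisfies it. *)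

theory Defs
  imports "HOL-Probability.Probability"
begin

definition cond_indep :: "'o pmf \<Rightarrow> ('o \<Rightarrow> 'a) \<Rightarrow> ('o \<Rightarrow> 'b) \<Rightarrow> ('o \<Rightarrow> 'c) \<Rightarrow> bool" where
  "cond_indep p X Z W \<longleftrightarrow>
     (\<forall>x z w. measure_pmf.prob p {\<omega>. X \<omega> = x \<and> Z \<omega> = z \<and> W \<omega> = w} * measure_pmf.prob p {\<omega>. W \<omega> = w}
            = measure_pmf.prob p {\<omega>. X \<omega> = x \<and> W \<omega> = w} * measure_pmf.prob p {\<omega>. Z \<omega> = z \<and> W \<omega> = w})"

definition sufficiency :: "'o pmf \<Rightarrow> ('o \<Rightarrow> 'y) \<Rightarrow> ('o \<Rightarrow> 'g) \<Rightarrow> ('o \<Rightarrow> 'y) \<Rightarrow> bool" where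
  "sufficiency p Y A R \<longleftrightarrow> cond_indep p Y A R"

definition separation :: "'o pmf \<Rightarrow> ('o \<Rightarrow> 'y) \<Rightarrow> ('o \<Rightarrow> 'g) \<Rightarrow> ('o \<Rightarrow> 'y) \<Rightarrow> bool" where
  "separation p Y A R \<longleftrightarrow> cond_indep p R A Y"

definition accuracy :: "'o pmf \<Rightarrow> ('o \<Rightarrow> 'y) \<Rightarrow> ('o \<Rightarrow> 'y) \<Rightarrow> real" where
  "accuracy p Y R = measure_pmf.prob p {\<omega>. R \<omega> = Y \<omega>}"

end

theory Submission
  imports Defs
begin

text \<open>A constant predictor satisfies separation for any population, and sufficiency
  exactly when Y and A are independent. So take Y and A independent fair coins and
  R = False. The predictor R' = Y \<and> A is additionally right when both coins show True,
  but within the class Y = True it coincides with A (no separation), and among the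
  outcomes with R' = False the events Y and A both occur yet never together
  (no sufficiency).\<close>

lemma cond_indep_const_left: "cond_indep p (\<lambda>_. c) Z W"
  unfolding cond_indep_def
proof (intro allI)
  fix x z w
  show "measure_pmf.prob p {\<omega>. c = x \<and> Z \<omega> = z \<and> W \<omega> = w} * measure_pmf.prob p {\<omega>. W \<omega> = w}
      = measure_pmf.prob p {\<omega>. c = x \<and> W \<omega> = w} * measure_pmf.prob p {\<omega>. Z \<omega> = z \<and> W \<omega> = w}"
    by (cases "c = x") (simp_all add: mult.commute)
qed

lemma cond_indep_const_cond_iff:
  "cond_indep p X Z (\<lambda>_. c) \<longleftrightarrow>
     (\<forall>x z. measure_pmf.prob p {\<omega>. X \<omega> = x \<and> Z \<omega> = z}
            = measure_pmf.prob p {\<omega>. X \<omega> = x} * measure_pmf.prob p {\<omega>. Z \<omega> = z})"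
  unfolding cond_indep_def by auto

lemma sufficiency_const_iff:
  "sufficiency p Y A (\<lambda>_. c) \<longleftrightarrow>
     (\<forall>y a. measure_pmf.prob p {\<omega>. Y \<omega> = y \<and> A \<omega> = a}
            = measure_pmf.prob p {\<omega>. Y \<omega> = y} * measure_pmf.prob p {\<omega>. A \<omega> = a})"
  unfolding sufficiency_def by (rule cond_indep_const_cond_iff)

lemma separation_const: "separation p Y A (\<lambda>_. c)"
  unfolding separation_def by (rule cond_indep_const_left)

lemma prob_uniform_four:
  fixes P :: "nat \<Rightarrow> bool"
  shows "measure_pmf.prob (pmf_of_set {..<4}) {\<omega>. P \<omega>} =
     ((if P 0 then 1 else 0) + (if P 1 then 1 else 0) + (if P 2 then 1 else 0) + (if P 3 then 1 else 0)) / 4"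
proof -
  have "measure_pmf.prob (pmf_of_set {..<4}) {\<omega>. P \<omega>} = real (card ({..<4::nat} \<inter> {\<omega>. P \<omega>})) / 4"
    by (subst measure_pmf_of_set) (auto simp: lessThan_empty_iff)
  also have "real (card ({..<4::nat} \<inter> {\<omega>. P \<omega>})) = (\<Sum>\<omega><4::nat. if P \<omega> then 1 else 0)"
    by (simp add: sum.If_cases Int_commute)
  also have "\<dots> = (if P 0 then 1 else 0) + (if P 1 then 1 else 0) + (if P 2 then 1 else 0) + (if P 3 then 1 else 0)"
    by (simp add: numeral_eq_Suc)
  finally show ?thesis .
qed

theorem proposition2p8:
  shows "\<exists>(p :: nat pmf) (Y :: nat \<Rightarrow> bool) (A :: nat \<Rightarrow> bool) (R :: nat \<Rightarrow> bool) (R' :: nat \<Rightarrow> bool).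
           sufficiency p Y A R \<and> separation p Y A R \<and>
           accuracy p Y R' > accuracy p Y R \<and>
           \<not> sufficiency p Y A R' \<and> \<not> separation p Y A R'"
proof (intro exI conjI)
  let ?p = "pmf_of_set {..<4}" and ?Y = "\<lambda>\<omega>::nat. odd \<omega>" and ?A = "\<lambda>\<omega>::nat. 2 \<le> \<omega>"
  let ?R' = "\<lambda>\<omega>. ?Y \<omega> \<and> ?A \<omega>"
  show "sufficiency ?p ?Y ?A (\<lambda>_. False)"
    unfolding sufficiency_const_iff prob_uniform_four by auto
  show "separation ?p ?Y ?A (\<lambda>_. False)"
    by (rule separation_const)
  show "accuracy ?p ?Y ?R' > accuracy ?p ?Y (\<lambda>_. False)"
    unfolding accuracy_def prob_uniform_four by simp
  have "measure_pmf.prob ?p {\<omega>. ?Y \<omega> = True \<and> ?A \<omega> = True \<and> ?R' \<omega> = False}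
          * measure_pmf.prob ?p {\<omega>. ?R' \<omega> = False}
        \<noteq> measure_pmf.prob ?p {\<omega>. ?Y \<omega> = True \<and> ?R' \<omega> = False}
          * measure_pmf.prob ?p {\<omega>. ?A \<omega> = True \<and> ?R' \<omega> = False}"
    unfolding prob_uniform_four by simp
  then show "\<not> sufficiency ?p ?Y ?A ?R'"
    unfolding sufficiency_def cond_indep_def by blast
  have "measure_pmf.prob ?p {\<omega>. ?R' \<omega> = True \<and> ?A \<omega> = True \<and> ?Y \<omega> = True}
          * measure_pmf.prob ?p {\<omega>. ?Y \<omega> = True}
        \<noteq> measure_pmf.prob ?p {\<omega>. ?R' \<omega> = True \<and> ?Y \<omega> = True}
          * measure_pmf.prob ?p {\<omega>. ?A \<omega> = True \<and> ?Y \<omega> = True}"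
    unfolding prob_uniform_four by simp
  then show "\<not> separation ?p ?Y ?A ?R'"
    unfolding separation_def cond_indep_def by blast
qed

end
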